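(* Let $\varphi$ be an Orlicz $N$-function with Young–Fenchel transform $\psi$ and let $q_\varphi$ be the generalized inverse of the density of $\varphi$. Let $\{X_{k,n}, k\ge1,n\ge1\}$ be a double array of $\varphi$-subgaussian random variables, and let $g$ be a positive non-decreasing function such that for all $k,n\ge1$ $$\tau_\varphi(X_{k,n})\le g(\ln(kn)).$$ Set $a_{m,j}=g(\ln(mj))\,\psi^{-1}(\ln(mj))$, $Y_{m,j}=\max_{1\le k\le m,1\le n\le j}X_{k,n}-a_{m,j}$ and $Y^+_{m,j}=\max(Y_{m,j},0)$. Suppose there exists $\varepsilon_0>0$ such that for every $\varepsilon\in(0,\varepsilon_0]$ $$\int_0^\infty \psi(x)\,q_\varphi(x)\exp\left(-\frac{\varepsilon\, q_\varphi(x)}{g(\psi(x)+\ln 2)}\right)dx<+\infty.$$ Then $\lim_{m\vee j\to\infty}Y^+_{m,j}=0$ almost surely.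
   Context: An Orlicz $N$-function is a continuous even convex function $\varphi:\mathbb R\to\mathbb R$ with $\varphi(0)=0$, increasing on $(0,\infty)$, with $\varphi(x)/x\to0$ as $x\to0$ and $\varphi(x)/x\to+\infty$ as $x\to+\infty$. It can be written $\varphi(x)=\int_0^{|x|}p_\varphi(t)\,dt$ with non-decreasing density $p_\varphi$; its generalized inverse is $q_\varphi(t)=\sup\{u\ge0:p_\varphi(u)\le t\}$. The Young–Fenchel transform is $\psi(x)=\sup_{y\in\mathbb R}(xy-\varphi(y))$; it is an Orlicz $N$-function with $\psi(x)=\int_0^{|x|}q_\varphi(t)\,dt$, and $\psi^{-1}$ denotes the inverse of $\psi$ restricted to $[0,\infty)$. A random variable $X$ is $\varphi$-subgaussian if $EX=0$ and there is a finite $a>0$ with $E\exp(tX)\le\exp(\varphi(at))$ for all $t\in\mathbb R$; its $\varphi$-subgaussian norm is $\tau_\varphi(X)=\inf\{a>0:E\exp(tX)\le\exp(\varphi(at))\ \forall t\in\mathbb R\}$. For a double array $b_{m,j}$, $\lim_{m\vee j\to\infty}b_{m,j}=b$ means: for every $\varepsilon>0$ there is $N$ such that $|b_{m,j}-b|<\varepsilon$ whenever $\max(m,j)\ge N$. *)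

theory Defs
  imports "HOL-Probability.Probability"
begin

definition orlicz_N :: "(real \<Rightarrow> real) \<Rightarrow> bool" where
  "orlicz_N \<phi> \<longleftrightarrow>
     continuous_on UNIV \<phi> \<and> (\<forall>x. \<phi> (- x) = \<phi> x) \<and> convex_on UNIV \<phi> \<and> \<phi> 0 = 0 \<and>
     strict_mono_on {0..} \<phi> \<and>
     ((\<lambda>x. \<phi> x / x) \<longlongrightarrow> 0) (at_right 0) \<and>
     filterlim (\<lambda>x. \<phi> x / x) at_top at_top"

text \<open>Density of phi: its right derivative (phi(x) = integral of it from 0 to |x|).\<close>
definition orlicz_density :: "(real \<Rightarrow> real) \<Rightarrow> real \<Rightarrow> real" where
  "orlicz_density \<phi> t = Lim (at_right 0) (\<lambda>h. (\<phi> (t + h) - \<phi> t) / h)"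

definition orlicz_q :: "(real \<Rightarrow> real) \<Rightarrow> real \<Rightarrow> real" where
  "orlicz_q \<phi> t = Sup {u. u \<ge> 0 \<and> orlicz_density \<phi> u \<le> t}"

definition young_fenchel :: "(real \<Rightarrow> real) \<Rightarrow> real \<Rightarrow> real" where
  "young_fenchel \<phi> x = (SUP y. x * y - \<phi> y)"

definition inv_pos :: "(real \<Rightarrow> real) \<Rightarrow> real \<Rightarrow> real" where
  "inv_pos \<psi> y = (THE x. x \<ge> 0 \<and> \<psi> x = y)"

definition mgf_bound :: "'a measure \<Rightarrow> (real \<Rightarrow> real) \<Rightarrow> ('a \<Rightarrow> real) \<Rightarrow> real \<Rightarrow> bool" where
  "mgf_bound M \<phi> X a \<longleftrightarrow>
     (\<forall>t. integrable M (\<lambda>\<omega>. exp (t * X \<omega>)) \<and>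
          (\<integral>\<omega>. exp (t * X \<omega>) \<partial>M) \<le> exp (\<phi> (a * t)))"

definition phi_subgaussian :: "'a measure \<Rightarrow> (real \<Rightarrow> real) \<Rightarrow> ('a \<Rightarrow> real) \<Rightarrow> bool" where
  "phi_subgaussian M \<phi> X \<longleftrightarrow>
     X \<in> borel_measurable M \<and> integrable M X \<and> (\<integral>\<omega>. X \<omega> \<partial>M) = 0 \<and>
     (\<exists>a>0. mgf_bound M \<phi> X a)"

definition tau_phi :: "'a measure \<Rightarrow> (real \<Rightarrow> real) \<Rightarrow> ('a \<Rightarrow> real) \<Rightarrow> real" where
  "tau_phi M \<phi> X = Inf {a. a > 0 \<and> mgf_bound M \<phi> X a}"

end

(*
  Chernoff's inequality gives P (X > c s + e) <= exp (- psi s - e q s / c) whenever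
  tau_phi X <= c, because psi (s + d) >= psi s + d q s. For the cell (k, n) with N = k n
  take c = g (ln N) and s = psi^-1 (ln N), so that c s = a N is the threshold: the cell
  probability is at most F / N with F = exp (- e q s / g (ln N)). On
  psi_shell N = psi^-1 [ln N - ln 2, ln N] the integrand of the hypothesis is at least
  (ln N - ln 2) F q, and q integrates to at least ln 2 over psi_shell N; hence the cell
  probability is at most shell_weight N = 1 / (N ln 2 (ln N - ln 2)) times the integral over
  psi_shell N. A point y lies in psi_shell N only if exp (psi y) <= N <= 2 exp (psi y), and
  the weights of these lattice points sum to a bounded constant, so the cell probabilities
  are summable. By Borel--Cantelli, almost surely only finitely many X k n exceed
  a (k n) + e; since a is non-decreasing and unbounded, the maximum over the rectangle
  exceeds a (m j) by at most e once max m j is large.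
*)
theory Submission
  imports Defs
begin

section \<open>Slopes, Riemann sums and lattice points\<close>

lemma slope_swap: "((a::real) - b) / (s - t) = (b - a) / (t - s)"
  by (cases "s = t") (simp_all add: field_simps)

lemma slope_swap_add: "((a::real) - b) / (t - (t + h)) = (b - a) / h"
  by (cases "h = 0") (simp_all add: field_simps)

lemma borel_measurable_mono_on_indicator:
  fixes f :: "real \<Rightarrow> real"
  assumes "mono_on A f" "A \<in> sets borel" "B \<subseteq> A" "B \<in> sets borel"
  shows "(\<lambda>y. ennreal (f y) * indicator B y) \<in> borel_measurable borel"
proof -
  have "(\<lambda>y. ennreal (f y)) \<in> borel_measurable (restrict_space borel A)"
    using borel_measurable_mono_on_fnc[OF assms(1)] by measurable
  then have "(\<lambda>y. ennreal (f y) * indicator A y * indicator B y) \<in> borel_measurable borel"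
    using assms(2,4) by (subst (asm) borel_measurable_restrict_space_iff_ennreal) auto
  also have "(\<lambda>y. ennreal (f y) * indicator A y * indicator B y) = (\<lambda>y. ennreal (f y) * indicator B y)"
    using assms(3) by (auto simp: fun_eq_iff indicator_def)
  finally show ?thesis .
qed

lemma sum_le_nn_integral_mono_on:
  fixes f :: "real \<Rightarrow> real"
  assumes f: "mono_on {a..} f" "\<And>x. a \<le> x \<Longrightarrow> 0 \<le> f x" and "0 \<le> h"
  shows "ennreal (\<Sum>i<n. h * f (a + real i * h)) \<le> (\<integral>\<^sup>+y\<in>{a..<a + real n * h}. ennreal (f y) \<partial>lborel)"
proof (induction n)
  case (Suc n)
  let ?c = "a + real n * h"
  have c: "a \<le> ?c" using \<open>0 \<le> h\<close> by simp
  have meas: "(\<lambda>y. ennreal (f y) * indicator {u..<v} y) \<in> borel_measurable borel" if "a \<le> u" for u v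
    using that by (intro borel_measurable_mono_on_indicator[OF f(1)]) auto
  have "ennreal (h * f ?c) = (\<integral>\<^sup>+y\<in>{?c..<?c + h}. ennreal (f ?c) \<partial>lborel)"
    using \<open>0 \<le> h\<close> f(2)[OF c] by (simp add: nn_integral_cmult_indicator ennreal_mult' mult.commute)
  also have "\<dots> \<le> (\<integral>\<^sup>+y\<in>{?c..<?c + h}. ennreal (f y) \<partial>lborel)"
    using mono_onD[OF f(1)] c by (intro nn_integral_mono) (auto simp: indicator_def intro: ennreal_leI)
  finally have last: "ennreal (h * f ?c) \<le> (\<integral>\<^sup>+y\<in>{?c..<?c + h}. ennreal (f y) \<partial>lborel)" .
  have "{a..<a + real (Suc n) * h} = {a..<?c} \<union> {?c..<?c + h}"
    using ivl_disj_un_two(3)[of a ?c "?c + h"] c \<open>0 \<le> h\<close> by (simp add: algebra_simps)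
  then have split: "indicator {a..<a + real (Suc n) * h} y
      = (indicator {a..<?c} y + indicator {?c..<?c + h} y :: ennreal)" for y
    by (auto simp: indicator_def)
  have "ennreal (\<Sum>i<Suc n. h * f (a + real i * h))
      = ennreal (\<Sum>i<n. h * f (a + real i * h)) + ennreal (h * f ?c)"
    using assms by (simp add: ennreal_plus sum_nonneg)
  also have "\<dots> \<le> (\<integral>\<^sup>+y\<in>{a..<?c}. ennreal (f y) \<partial>lborel) + (\<integral>\<^sup>+y\<in>{?c..<?c + h}. ennreal (f y) \<partial>lborel)"
    using Suc.IH last by (rule add_mono)
  also have "\<dots> = (\<integral>\<^sup>+y\<in>{a..<a + real (Suc n) * h}. ennreal (f y) \<partial>lborel)"
    unfolding split distrib_left using meas c by (intro nn_integral_add[symmetric]) auto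
  finally show ?case .
qed simp

lemma harm_le_1_plus_ln:
  assumes "1 \<le> K"
  shows "(harm K :: real) \<le> 1 + ln (real K)"
proof -
  obtain m where "K = Suc m" using assms by (cases K) auto
  moreover have "harm (Suc m) - ln (real (Suc m)) \<le> (harm (Suc 0) - ln (real (Suc 0)) :: real)"
    using decseqD[OF decseq_harm_diff_ln, of 0 m] by simp
  ultimately show ?thesis by (simp add: harm_def)
qed

lemma hyperbola_lattice_points:
  fixes x :: real
  assumes "1 \<le> x"
  shows "finite {(k, n). 1 \<le> k \<and> 1 \<le> n \<and> real (k * n) \<le> x}"
    and "real (card {(k, n). 1 \<le> k \<and> 1 \<le> n \<and> real (k * n) \<le> x}) \<le> x * (1 + ln x)"
proof -
  define K where "K = nat \<lfloor>x\<rfloor>"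
  have K: "1 \<le> K" "real K \<le> x" using assms by (simp_all add: K_def le_nat_floor)
  let ?H = "{(k, n). 1 \<le> k \<and> 1 \<le> n \<and> real (k * n) \<le> x}"
  let ?S = "SIGMA k:{1..K}. {1..nat \<lfloor>x / real k\<rfloor>}"
  have sub: "?H \<subseteq> ?S"
  proof
    fix p assume "p \<in> ?H"
    then obtain k n where p: "p = (k, n)" and kn: "1 \<le> k" "1 \<le> n" "real (k * n) \<le> x" by auto
    have "real k \<le> x" "real n \<le> x / real k"
      using kn order_trans[OF _ kn(3), of "real k"] by (simp_all add: field_simps)
    then show "p \<in> ?S" using kn by (simp add: p K_def le_nat_floor)
  qed
  then show "finite ?H" by (rule finite_subset) simp
  have "card ?H \<le> card ?S" by (rule card_mono[OF _ sub]) simp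
  then have "real (card ?H) \<le> (\<Sum>k=1..K. real (nat \<lfloor>x / real k\<rfloor>))"
    using of_nat_mono by fastforce
  also have "\<dots> \<le> (\<Sum>k=1..K. x * inverse (real k))"
    using assms by (intro sum_mono) (simp add: divide_inverse[symmetric])
  also have "\<dots> = x * harm K" by (simp add: harm_def sum_distrib_left)
  also have "\<dots> \<le> x * (1 + ln x)"
  proof (rule mult_left_mono)
    have "ln (real K) \<le> ln x" using K by simp
    then show "harm K \<le> 1 + ln x" using harm_le_1_plus_ln[OF K(1)] by simp
  qed (use assms in simp)
  finally show "real (card ?H) \<le> x * (1 + ln x)" .
qed

definition large_cells :: "(nat \<times> nat) set" where
  "large_cells = {(k, n). 1 \<le> k \<and> 1 \<le> n \<and> 4 \<le> k * n}"

lemma large_cells_size: "i \<in> large_cells \<Longrightarrow> 4 \<le> real (fst i * snd i)"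
proof -
  assume "i \<in> large_cells"
  then have "real 4 \<le> real (fst i * snd i)" unfolding large_cells_def by (simp only: of_nat_le_iff) auto
  then show ?thesis by simp
qed

lemma finite_small_cells: "finite {(k, n). 1 \<le> k \<and> 1 \<le> n \<and> (k, n) \<notin> large_cells}"
proof (rule finite_subset)
  show "{(k, n). 1 \<le> k \<and> 1 \<le> n \<and> (k, n) \<notin> large_cells} \<subseteq> {..3} \<times> {..3}"
  proof
    fix i assume "i \<in> {(k, n). 1 \<le> k \<and> 1 \<le> n \<and> (k, n) \<notin> large_cells}"
    then obtain k n where i: "i = (k, n)" and kn: "1 \<le> k" "1 \<le> n" "k * n < 4"
      by (auto simp: large_cells_def)
    have "k \<le> k * n" "n \<le> k * n"
      using mult_le_mono2[OF kn(2), of k] mult_le_mono1[OF kn(1), of n] by simp_all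
    then show "i \<in> {..3} \<times> {..3}"
      unfolding i mem_Times_iff atMost_iff fst_conv snd_conv using kn(3) by linarith
  qed
qed simp

definition shell_weight :: "real \<Rightarrow> real" where
  "shell_weight N = 1 / (N * ln 2 * (ln N - ln 2))"

lemma shell_weight_nonneg: "2 \<le> N \<Longrightarrow> 0 \<le> shell_weight N"
  by (simp add: shell_weight_def)

lemma shell_weight_le:
  fixes u N :: real
  assumes "0 \<le> u" "4 \<le> N" "exp u \<le> N"
  shows "shell_weight N \<le> 2 / (exp u * ln 2 * max u (ln 4))"
proof -
  define m where "m = max u (ln 4)"
  have m: "0 < m" by (simp add: m_def less_max_iff_disj)
  have "u \<le> ln N" "ln 4 \<le> ln N" using assms by (auto simp: ln_ge_iff)
  moreover have "ln (4::real) = 2 * ln 2" using ln_realpow[of 2 2] by simp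
  ultimately have "m / 2 \<le> ln N - ln 2" by (auto simp: m_def)
  then have "exp u * (ln 2 * (m / 2)) \<le> N * (ln 2 * (ln N - ln 2))"
    using assms m by (intro mult_mono mult_left_mono) auto
  moreover have "ln 2 < ln N" using assms(2) by simp
  ultimately have "1 / (N * ln 2 * (ln N - ln 2)) \<le> 1 / (exp u * ln 2 * m / 2)"
    using m assms(2) by (intro divide_left_mono mult_pos_pos) (auto simp: mult.assoc)
  then show ?thesis by (simp add: shell_weight_def m_def)
qed

text \<open>At most \<open>2 exp u (1 + ln 2 + u)\<close> lattice points have \<open>k * n \<le> 2 exp u\<close>,
  and each of them has weight \<open>O (exp (- u) / u)\<close>.\<close>

lemma dyadic_shell_weight_sum_le:
  assumes "0 \<le> u"
    and S: "S \<subseteq> {(k, n). 1 \<le> k \<and> 1 \<le> n \<and> 4 \<le> k * n \<and> exp u \<le> real (k * n) \<and> real (k * n) \<le> 2 * exp u}"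
  shows "(\<Sum>(k, n)\<in>S. shell_weight (real (k * n))) \<le> 4 / ln 2 * ((1 + ln 2) / ln 4 + 1)"
proof -
  define A where "A = exp u"
  define m where "m = max u (ln 4)"
  have A: "1 \<le> A" using assms(1) by (simp add: A_def)
  have m: "0 < m" by (simp add: m_def less_max_iff_disj)
  let ?T = "{(k, n). 1 \<le> k \<and> 1 \<le> n \<and> real (k * n) \<le> 2 * A}"
  have "S \<subseteq> ?T" using S by (auto simp: A_def)
  have "shell_weight (real (k * n)) \<le> 2 / (A * ln 2 * m)" if "(k, n) \<in> S" for k n
  proof -
    have "real 4 \<le> real (k * n)" using subsetD[OF S that] by (simp only: of_nat_le_iff) auto
    then show ?thesis
      using subsetD[OF S that] shell_weight_le[OF assms(1)] by (simp add: A_def m_def)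
  qed
  then have "(\<Sum>(k, n)\<in>S. shell_weight (real (k * n))) \<le> real (card S) * (2 / (A * ln 2 * m))"
    by (intro sum_bounded_above) auto
  also have "\<dots> \<le> (2 * A) * (1 + ln (2 * A)) * (2 / (A * ln 2 * m))"
    using hyperbola_lattice_points[of "2 * A"] card_mono[OF _ \<open>S \<subseteq> ?T\<close>] A m
    by (intro mult_right_mono) (auto intro: order_trans[rotated])
  also have "\<dots> = 4 / ln 2 * ((1 + ln 2 + u) / m)"
    using A m by (simp add: ln_mult A_def field_simps)
  also have "\<dots> \<le> 4 / ln 2 * ((1 + ln 2) / ln 4 + 1)"
  proof (rule mult_left_mono)
    have "(1 + ln 2) / m \<le> (1 + ln 2) / ln 4" using m by (intro divide_left_mono) (auto simp: m_def)
    moreover have "u / m \<le> 1" using m by (simp add: m_def)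
    ultimately show "(1 + ln 2 + u) / m \<le> (1 + ln 2) / ln 4 + 1" by (simp add: add_divide_distrib)
  qed simp
  finally show ?thesis .
qed

section \<open>Finitely many exceedances\<close>

context prob_space
begin

lemma AE_finitely_many_events:
  fixes E :: "'i::countable \<Rightarrow> 'a set"
  assumes E: "\<And>i. E i \<in> events" and sum: "(\<integral>\<^sup>+i. emeasure M (E i) \<partial>count_space UNIV) < \<infinity>"
  shows "AE x in M. finite {i. x \<in> E i}"
proof -
  define A where "A m = (if m \<in> range (to_nat :: 'i \<Rightarrow> nat) then E (from_nat m) else {})" for m :: nat
  have A: "A m \<in> events" for m using E by (simp add: A_def)
  have "(\<Sum>m. ennreal (measure M (A m))) = (\<integral>\<^sup>+m. emeasure M (A m) \<partial>count_space UNIV)"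
    by (simp add: nn_integral_count_space_nat emeasure_eq_measure)
  also have "\<dots> = (\<integral>\<^sup>+m. emeasure M (E (from_nat m)) * indicator (range (to_nat :: 'i \<Rightarrow> nat)) m \<partial>count_space UNIV)"
    by (intro nn_integral_cong) (simp add: A_def indicator_def)
  also have "\<dots> = (\<integral>\<^sup>+m. emeasure M (E (from_nat m)) \<partial>count_space (range (to_nat :: 'i \<Rightarrow> nat)))"
    by (simp add: nn_integral_count_space_indicator)
  also have "\<dots> = (\<integral>\<^sup>+i. emeasure M (E i) \<partial>count_space UNIV)"
    by (subst nn_integral_bij_count_space[of to_nat UNIV, symmetric]) (auto simp: bij_betw_def)
  finally have "summable (\<lambda>m. measure M (A m))"
    using sum by (intro summable_suminf_not_top) auto
  then have "AE x in M. eventually (\<lambda>m. x \<in> space M - A m) sequentially"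
    using A by (intro borel_cantelli_AE1) (auto simp: emeasure_eq_measure)
  then show ?thesis
  proof (rule eventually_mono)
    fix x assume "eventually (\<lambda>m. x \<in> space M - A m) sequentially"
    then obtain m0 where m0: "\<And>m. m0 \<le> m \<Longrightarrow> x \<notin> A m" by (auto simp: eventually_sequentially)
    have "{i. x \<in> E i} \<subseteq> from_nat ` {..<m0}"
    proof
      fix i assume "i \<in> {i. x \<in> E i}"
      then have "x \<in> A (to_nat i)" by (simp add: A_def)
      then have "to_nat i < m0" using m0 not_le by blast
      then show "i \<in> from_nat ` {..<m0}" by (intro image_eqI[of _ from_nat "to_nat i"]) simp_all
    qed
    then show "finite {i. x \<in> E i}" by (rule finite_subset) simp
  qed
qed

end

lemma max_sub_threshold_eventually_less:
  fixes x :: "nat \<Rightarrow> nat \<Rightarrow> real" and a :: "real \<Rightarrow> real"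
  assumes mono: "mono_on {1..} a" and a_top: "filterlim a at_top at_top"
    and exceed: "\<And>e. 0 < e \<Longrightarrow> finite {(k, n). 1 \<le> k \<and> 1 \<le> n \<and> a (real (k * n)) + e < x k n}"
    and "0 < e"
  shows "\<exists>N. \<forall>m j. 1 \<le> m \<and> 1 \<le> j \<and> N \<le> max m j \<longrightarrow>
           \<bar>max (Max {x k n | k n. 1 \<le> k \<and> k \<le> m \<and> 1 \<le> n \<and> n \<le> j} - a (real (m * j))) 0\<bar> < e"
proof -
  define F where "F = {(k, n). 1 \<le> k \<and> 1 \<le> n \<and> a (real (k * n)) + e / 2 < x k n}"
  define B where "B = Max (insert 0 ((\<lambda>(k, n). x k n) ` F))"
  have B: "x k n \<le> B" if "(k, n) \<in> F" for k n
    using exceed[of "e / 2"] \<open>0 < e\<close> that by (auto simp: B_def F_def intro!: Max_ge)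
  obtain N0 where N0: "\<And>t. N0 \<le> t \<Longrightarrow> B \<le> a t"
    using a_top by (auto simp: filterlim_at_top eventually_at_top_linorder)
  define N where "N = nat \<lceil>N0\<rceil>"
  have "\<bar>max (Max {x k n | k n. 1 \<le> k \<and> k \<le> m \<and> 1 \<le> n \<and> n \<le> j} - a (real (m * j))) 0\<bar> < e"
    if mj: "1 \<le> m" "1 \<le> j" "N \<le> max m j" for m j
  proof -
    have "max m j \<le> m * j" using mj by (simp add: max_def)
    then have "N0 \<le> real (m * j)"
      using mj(3) unfolding N_def by linarith
    then have B_le: "B \<le> a (real (m * j))" by (rule N0)
    have "x k n \<le> a (real (m * j)) + e / 2" if "1 \<le> k" "k \<le> m" "1 \<le> n" "n \<le> j" for k n
    proof (cases "(k, n) \<in> F")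
      case True
      then show ?thesis using B[of k n] B_le \<open>0 < e\<close> by simp
    next
      case False
      have "1 \<le> k * n" "k * n \<le> m * j" using that by (simp_all add: mult_le_mono)
      then have "real 1 \<le> real (k * n)" "real (k * n) \<le> real (m * j)"
        by (simp_all only: of_nat_le_iff)
      then have "a (real (k * n)) \<le> a (real (m * j))"
        by (intro mono_onD[OF mono]) auto
      then show ?thesis using False that by (auto simp: F_def)
    qed
    moreover have "{x k n | k n. 1 \<le> k \<and> k \<le> m \<and> 1 \<le> n \<and> n \<le> j}
        = (\<lambda>(k, n). x k n) ` ({1..m} \<times> {1..j})"
      by auto blast
    ultimately have "Max {x k n | k n. 1 \<le> k \<and> k \<le> m \<and> 1 \<le> n \<and> n \<le> j} \<le> a (real (m * j)) + e / 2"
      using mj by (simp add: Max_le_iff)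
    then show ?thesis using \<open>0 < e\<close> by simp
  qed
  then show ?thesis by blast
qed

section \<open>Orlicz N-functions\<close>

lemma young_fenchel_le:
  assumes "\<And>y. x * y - \<phi> y \<le> c"
  shows "young_fenchel \<phi> x \<le> c"
  unfolding young_fenchel_def by (rule cSUP_least) (use assms in auto)

locale orlicz_function =
  fixes \<phi> :: "real \<Rightarrow> real"
  assumes orlicz_N: "orlicz_N \<phi>"
begin

abbreviation \<psi> :: "real \<Rightarrow> real" where "\<psi> \<equiv> young_fenchel \<phi>"
abbreviation p :: "real \<Rightarrow> real" where "p \<equiv> orlicz_density \<phi>"
abbreviation q :: "real \<Rightarrow> real" where "q \<equiv> orlicz_q \<phi>"

lemma phi_continuous: "continuous_on UNIV \<phi>"
  and phi_even: "\<phi> (- x) = \<phi> x"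
  and phi_convex: "convex_on UNIV \<phi>"
  and phi_zero: "\<phi> 0 = 0"
  and phi_strict_mono: "strict_mono_on {0..} \<phi>"
  and phi_div_tendsto_0: "((\<lambda>x. \<phi> x / x) \<longlongrightarrow> 0) (at_right 0)"
  and phi_div_at_top: "filterlim (\<lambda>x. \<phi> x / x) at_top at_top"
  using orlicz_N by (simp_all add: orlicz_N_def)

lemma phi_abs: "\<phi> \<bar>x\<bar> = \<phi> x"
  using phi_even[of x] by (cases "x \<ge> 0") auto

lemma phi_mono_abs:
  assumes "\<bar>x\<bar> \<le> \<bar>y\<bar>"
  shows "\<phi> x \<le> \<phi> y"
  using strict_mono_on_leD[OF phi_strict_mono, of "\<bar>x\<bar>" "\<bar>y\<bar>"] assms
  by (simp add: phi_abs)

lemma phi_nonneg: "0 \<le> \<phi> x"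
  using phi_mono_abs[of 0 x] by (simp add: phi_zero)

lemma phi_superlinear: "\<exists>R>0. \<forall>y. R \<le> \<bar>y\<bar> \<longrightarrow> C * \<bar>y\<bar> \<le> \<phi> y"
proof -
  obtain N where N: "\<And>x. N \<le> x \<Longrightarrow> C \<le> \<phi> x / x"
    using phi_div_at_top by (auto simp: filterlim_at_top eventually_at_top_linorder)
  have "C * \<bar>y\<bar> \<le> \<phi> y" if "max N 1 \<le> \<bar>y\<bar>" for y
  proof -
    have "0 < \<bar>y\<bar>" using that by linarith
    then show ?thesis using N[of "\<bar>y\<bar>"] that by (simp add: pos_le_divide_eq phi_abs)
  qed
  then show ?thesis by (intro exI[of _ "max N 1"]) auto
qed

lemma right_slope_mono:
  assumes "0 < h1" "h1 \<le> h2"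
  shows "(\<phi> (t + h1) - \<phi> t) / h1 \<le> (\<phi> (t + h2) - \<phi> t) / h2"
proof (cases "h1 = h2")
  case False
  have "(\<phi> t - \<phi> (t + h1)) / (t - (t + h1)) \<le> (\<phi> t - \<phi> (t + h2)) / (t - (t + h2))"
    by (rule convex_on_slope_le(1)[OF phi_convex]) (use False assms in auto)
  then show ?thesis unfolding slope_swap_add .
qed simp

lemma chord_le_right_slope:
  assumes "z < t" "0 < h"
  shows "(\<phi> t - \<phi> z) / (t - z) \<le> (\<phi> (t + h) - \<phi> t) / h"
proof -
  have "(\<phi> z - \<phi> t) / (z - t) \<le> (\<phi> z - \<phi> (t + h)) / (z - (t + h))"
    by (rule convex_on_slope_le(1)[OF phi_convex]) (use assms in auto)
  also have "\<dots> \<le> (\<phi> t - \<phi> (t + h)) / (t - (t + h))"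
    by (rule convex_on_slope_le(2)[OF phi_convex]) (use assms in auto)
  finally show ?thesis unfolding slope_swap slope_swap_add .
qed

lemma density_eq_Inf: "p t = Inf ((\<lambda>h. (\<phi> (t + h) - \<phi> t) / h) ` {0<..})"
proof -
  let ?D = "\<lambda>h. (\<phi> (t + h) - \<phi> t) / h"
  have "(?D \<longlongrightarrow> Inf (?D ` ({0<..} \<inter> UNIV))) (at 0 within ({0<..} \<inter> UNIV))"
    by (rule Lim_right_bound[where K = "\<phi> t - \<phi> (t - 1)"])
       (use right_slope_mono chord_le_right_slope[of "t - 1" t] in auto)
  then show ?thesis
    unfolding orlicz_density_def by (intro tendsto_Lim) simp_all
qed

lemma right_slopes_bdd_below: "bdd_below ((\<lambda>h. (\<phi> (t + h) - \<phi> t) / h) ` {0<..})"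
  by (rule bdd_belowI2[of _ "\<phi> t - \<phi> (t - 1)"]) (use chord_le_right_slope[of "t - 1" t] in auto)

lemma density_le_right_slope:
  assumes "0 < h"
  shows "p t \<le> (\<phi> (t + h) - \<phi> t) / h"
  unfolding density_eq_Inf using assms by (intro cInf_lower right_slopes_bdd_below) auto

lemma chord_le_density:
  assumes "z < t"
  shows "(\<phi> t - \<phi> z) / (t - z) \<le> p t"
  unfolding density_eq_Inf using chord_le_right_slope[OF assms] by (intro cInf_greatest) auto

lemma density_zero: "p 0 = 0"
  unfolding orlicz_density_def using phi_div_tendsto_0 by (intro tendsto_Lim) (simp_all add: phi_zero)

lemma young_fenchel_bdd: "bdd_above (range (\<lambda>y. x * y - \<phi> y))"
proof -
  obtain R where R: "R > 0" "\<And>y. R \<le> \<bar>y\<bar> \<Longrightarrow> \<bar>x\<bar> * \<bar>y\<bar> \<le> \<phi> y"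
    using phi_superlinear[of "\<bar>x\<bar>"] by auto
  have "x * y - \<phi> y \<le> \<bar>x\<bar> * R" for y
  proof -
    have "x * y \<le> \<bar>x\<bar> * \<bar>y\<bar>" by (simp add: abs_mult abs_le_D1)
    moreover have "\<bar>x\<bar> * \<bar>y\<bar> \<le> \<bar>x\<bar> * R" if "\<bar>y\<bar> \<le> R"
      using that by (simp add: mult_left_mono)
    ultimately show ?thesis
      using R(1) R(2)[of y] phi_nonneg[of y] by (smt (verit) abs_ge_zero mult_nonneg_nonneg)
  qed
  then show ?thesis by (auto intro!: bdd_aboveI2)
qed

lemma young_inequality: "x * y - \<phi> y \<le> \<psi> x"
  unfolding young_fenchel_def by (rule cSUP_upper[OF _ young_fenchel_bdd]) simp

lemma young_fenchel_nonneg: "0 \<le> \<psi> x"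
  using young_inequality[of x 0] by (simp add: phi_zero)

lemma young_fenchel_zero: "\<psi> 0 = 0"
  using young_fenchel_le[of 0 \<phi> 0] young_fenchel_nonneg[of 0] by (simp add: phi_nonneg)

lemma density_sublevel_zero: "0 \<le> s \<Longrightarrow> 0 \<in> {u. 0 \<le> u \<and> p u \<le> s}"
  by (simp add: density_zero)

lemma density_sublevel_bdd: "bdd_above {u. 0 \<le> u \<and> p u \<le> s}"
proof -
  obtain R where R: "R > 0" "\<And>y. R \<le> \<bar>y\<bar> \<Longrightarrow> (\<bar>s\<bar> + 1) * \<bar>y\<bar> \<le> \<phi> y"
    using phi_superlinear[of "\<bar>s\<bar> + 1"] by auto
  have "u \<le> R" if "0 \<le> u" "p u \<le> s" for u
  proof (rule ccontr)
    assume "\<not> u \<le> R"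
    then have u: "0 < u" "R \<le> \<bar>u\<bar>" using R(1) by auto
    have "\<bar>s\<bar> + 1 = (\<bar>s\<bar> + 1) * \<bar>u\<bar> / (u - 0)" using u by simp
    also have "\<dots> \<le> (\<phi> u - \<phi> 0) / (u - 0)"
      using R(2)[OF u(2)] u(1) by (intro divide_right_mono) (auto simp: phi_zero)
    also have "\<dots> \<le> s" using chord_le_density[OF u(1)] that(2) by simp
    finally show False by simp
  qed
  then show ?thesis by (auto intro!: bdd_aboveI)
qed

lemma le_q: "0 \<le> u \<Longrightarrow> p u \<le> s \<Longrightarrow> u \<le> q s"
  unfolding orlicz_q_def by (rule cSup_upper[OF _ density_sublevel_bdd]) simp

lemma q_nonneg: "0 \<le> s \<Longrightarrow> 0 \<le> q s"
  using le_q[of 0 s] by (simp add: density_zero)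

lemma q_less_imp_density_gt: "q s < w \<Longrightarrow> 0 \<le> w \<Longrightarrow> s < p w"
  using le_q[of w s] by fastforce

text \<open>The next two lemmas say that \<open>q s\<close> lies between the left and the right derivative
  of \<open>\<psi>\<close> at \<open>s\<close>; the maximiser of \<open>s * y - \<phi> y\<close> is \<open>y = q s\<close>.\<close>

lemma young_fenchel_add_ge:
  assumes "0 \<le> s" "0 \<le> \<delta>"
  shows "\<psi> s + \<delta> * q s \<le> \<psi> (s + \<delta>)"
proof -
  have "\<psi> s \<le> \<psi> (s + \<delta>) - \<delta> * u" if u: "0 \<le> u" "p u \<le> s" for u
  proof (rule young_fenchel_le)
    fix y
    have "(s + \<delta>) * y - \<phi> y \<le> \<psi> (s + \<delta>)" "(s + \<delta>) * u - \<phi> u \<le> \<psi> (s + \<delta>)"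
      by (rule young_inequality)+
    moreover have "\<phi> u - \<phi> y \<le> s * (u - y)" if "y < u"
    proof -
      have "\<phi> u - \<phi> y \<le> p u * (u - y)"
        using chord_le_density[OF that] that by (simp add: pos_divide_le_eq)
      also have "\<dots> \<le> s * (u - y)" using u(2) that by (intro mult_right_mono) auto
      finally show ?thesis .
    qed
    moreover have "\<delta> * u \<le> \<delta> * y" if "u \<le> y"
      using that assms(2) by (rule mult_left_mono)
    ultimately show "s * y - \<phi> y \<le> \<psi> (s + \<delta>) - \<delta> * u"
      by (cases "y < u") (auto simp: algebra_simps)
  qed
  note step = this
  show ?thesis
  proof (cases "\<delta> = 0")
    case False
    then have "0 < \<delta>" using assms(2) by simp
    have "q s \<le> (\<psi> (s + \<delta>) - \<psi> s) / \<delta>"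
      unfolding orlicz_q_def
    proof (rule cSup_least)
      show "{u. 0 \<le> u \<and> p u \<le> s} \<noteq> {}" using density_sublevel_zero[OF assms(1)] by blast
      fix u assume "u \<in> {u. 0 \<le> u \<and> p u \<le> s}"
      then have "\<psi> s \<le> \<psi> (s + \<delta>) - \<delta> * u" using step by simp
      then show "u \<le> (\<psi> (s + \<delta>) - \<psi> s) / \<delta>" using \<open>0 < \<delta>\<close> by (simp add: pos_le_divide_eq mult.commute)
    qed
    then show ?thesis using \<open>0 < \<delta>\<close> by (simp add: pos_le_divide_eq mult.commute)
  qed simp
qed

lemma young_fenchel_le_add:
  assumes "0 \<le> a" "a \<le> b"
  shows "\<psi> b \<le> \<psi> a + (b - a) * q b"
proof -
  have "\<psi> b \<le> \<psi> a + (b - a) * w" if w: "q b < w" for w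
  proof (rule young_fenchel_le)
    have w0: "0 \<le> w" using q_nonneg[of b] w assms by simp
    have le_w: "b * y - \<phi> y \<le> \<psi> a + (b - a) * w" if "y \<le> w" for y
      using young_inequality[of a y] mult_left_mono[OF that, of "b - a"] assms
      by (simp add: algebra_simps)
    fix y
    show "b * y - \<phi> y \<le> \<psi> a + (b - a) * w"
    proof (cases "y \<le> w")
      case False
      have "b < (\<phi> (w + (y - w)) - \<phi> w) / (y - w)"
        using q_less_imp_density_gt[OF w w0] density_le_right_slope[of "y - w" w] False by simp
      then have "b * y - \<phi> y < b * w - \<phi> w"
        using False by (simp add: less_divide_eq algebra_simps)
      then show ?thesis using le_w[of w] by simp
    qed (rule le_w)
  qed
  note step = this
  show ?thesis
  proof (cases "a = b")
    case False
    then have "0 < b - a" using assms by simp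
    have "(\<psi> b - \<psi> a) / (b - a) \<le> q b"
    proof (rule dense_ge)
      fix w assume "q b < w"
      then have "\<psi> b - \<psi> a \<le> w * (b - a)" using step[of w] by (simp add: mult.commute)
      then show "(\<psi> b - \<psi> a) / (b - a) \<le> w" using \<open>0 < b - a\<close> by (simp add: pos_divide_le_eq)
    qed
    then show ?thesis using \<open>0 < b - a\<close> by (simp add: pos_divide_le_eq mult.commute)
  qed simp
qed

lemma q_mono:
  assumes "0 \<le> a" "a \<le> b"
  shows "q a \<le> q b"
proof (cases "a = b")
  case False
  have "(b - a) * q a \<le> (b - a) * q b"
    using young_fenchel_add_ge[OF assms(1), of "b - a"] young_fenchel_le_add[OF assms] assms by simp
  then show ?thesis using False assms by simp
qed simp

lemma q_mono_on: "mono_on {0..} q"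
  by (rule mono_onI) (auto intro: q_mono)

lemma q_pos:
  assumes "0 < s"
  shows "0 < q s"
proof -
  have "\<forall>\<^sub>F y in at_right 0. \<phi> y / y < s / 2"
    using order_tendstoD(2)[OF phi_div_tendsto_0, of "s / 2"] assms by simp
  then obtain b where b: "0 < b" "\<And>y. 0 < y \<Longrightarrow> y < b \<Longrightarrow> \<phi> y / y < s / 2"
    unfolding eventually_at_right_field by blast
  define u where "u = b / 4"
  have u: "0 < u" "2 * u < b" using b(1) by (simp_all add: u_def)
  have "\<phi> (2 * u) < s * u"
    using b(2)[of "2 * u"] u by (simp add: divide_less_eq)
  then have "(\<phi> (u + u) - \<phi> u) / u < s"
    using u(1) phi_nonneg[of u] by (simp add: divide_less_eq mult_2[symmetric] mult.commute)
  then have "p u \<le> s" using density_le_right_slope[OF u(1), of u] by simp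
  then show ?thesis using le_q[of u s] u(1) by simp
qed

lemma young_fenchel_mono:
  assumes "0 \<le> a" "a \<le> b"
  shows "\<psi> a \<le> \<psi> b"
proof -
  have "0 \<le> (b - a) * q a" using q_nonneg[OF assms(1)] assms(2) by simp
  then show ?thesis using young_fenchel_add_ge[OF assms(1), of "b - a"] assms(2) by simp
qed

lemma young_fenchel_mono_on: "mono_on {0..} \<psi>"
  by (rule mono_onI) (auto intro: young_fenchel_mono)

lemma young_fenchel_strict_mono: "strict_mono_on {0..} \<psi>"
proof (rule strict_mono_onI)
  fix a b :: real assume "a \<in> {0..}" "b \<in> {0..}" "a < b"
  define m where "m = (a + b) / 2"
  have m: "0 < m" "a \<le> m" "m < b" using \<open>a \<in> {0..}\<close> \<open>a < b\<close> by (auto simp: m_def)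
  have "\<psi> a \<le> \<psi> m" using m \<open>a \<in> {0..}\<close> by (intro young_fenchel_mono) auto
  also have "\<dots> < \<psi> m + (b - m) * q m" using q_pos[OF m(1)] m(3) by simp
  also have "\<dots> \<le> \<psi> b" using young_fenchel_add_ge[of m "b - m"] m by simp
  finally show "\<psi> a < \<psi> b" .
qed

lemma young_fenchel_lipschitz_on:
  assumes "0 \<le> R"
  shows "(q R)-lipschitz_on {0..R} \<psi>"
proof -
  have "\<bar>\<psi> b - \<psi> a\<bar> \<le> q R * \<bar>b - a\<bar>" if "0 \<le> a" "a \<le> b" "b \<le> R" for a b
  proof -
    have "\<psi> b \<le> \<psi> a + (b - a) * q b" by (rule young_fenchel_le_add) fact+
    also have "\<dots> \<le> \<psi> a + (b - a) * q R"
      using q_mono[of b R] that by (intro add_left_mono mult_left_mono) auto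
    finally show ?thesis using young_fenchel_mono[OF that(1,2)] that(2) by (simp add: mult.commute)
  qed
  note bound = this
  show ?thesis
  proof (rule lipschitz_onI)
    fix x y assume "x \<in> {0..R}" "y \<in> {0..R}"
    then show "dist (\<psi> x) (\<psi> y) \<le> q R * dist x y"
      using bound[of x y] bound[of y x] by (cases "x \<le> y") (auto simp: dist_real_def abs_minus_commute)
  qed (rule q_nonneg[OF assms])
qed

lemma young_fenchel_ge_linear: "x - \<phi> 1 \<le> \<psi> x"
  using young_inequality[of x 1] by simp

lemma young_fenchel_surj:
  assumes "0 \<le> L"
  shows "\<exists>x\<ge>0. \<psi> x = L"
proof -
  define R where "R = L + \<phi> 1"
  have R: "0 \<le> R" "L \<le> \<psi> R" "\<psi> 0 \<le> L"
    using assms phi_nonneg[of 1] young_fenchel_ge_linear[of R] by (simp_all add: R_def young_fenchel_zero)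
  have "continuous_on {0..R} \<psi>"
    by (rule lipschitz_on_continuous_on[OF young_fenchel_lipschitz_on[OF R(1)]])
  then show ?thesis
    using IVT'[OF R(3) R(2) R(1)] by blast
qed

lemma inv_pos_young_fenchel:
  assumes "0 \<le> L"
  shows "0 \<le> inv_pos \<psi> L" and "\<psi> (inv_pos \<psi> L) = L"
proof -
  obtain x where x: "0 \<le> x" "\<psi> x = L" using young_fenchel_surj[OF assms] by blast
  have "inv_pos \<psi> L = x"
    unfolding inv_pos_def
  proof (rule the_equality)
    fix z assume "0 \<le> z \<and> \<psi> z = L"
    then show "z = x" using x strict_mono_on_eqD[OF young_fenchel_strict_mono, of x z] by simp
  qed (use x in simp)
  with x show "0 \<le> inv_pos \<psi> L" "\<psi> (inv_pos \<psi> L) = L" by simp_all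
qed

lemma inv_pos_mono:
  assumes "0 \<le> L1" "L1 \<le> L2"
  shows "inv_pos \<psi> L1 \<le> inv_pos \<psi> L2"
proof (rule ccontr)
  assume "\<not> ?thesis"
  then have "\<psi> (inv_pos \<psi> L2) < \<psi> (inv_pos \<psi> L1)"
    using assms inv_pos_young_fenchel(1) by (intro strict_mono_onD[OF young_fenchel_strict_mono]) auto
  then show False using assms inv_pos_young_fenchel(2)[of L1] inv_pos_young_fenchel(2)[of L2] by simp
qed

lemma inv_pos_at_top: "filterlim (inv_pos \<psi>) at_top at_top"
proof (subst filterlim_at_top_ge[where c = 0], intro allI impI)
  fix Z :: real assume "0 \<le> Z"
  have "Z \<le> inv_pos \<psi> L" if "\<psi> Z < L" for L
    using young_fenchel_mono[of "inv_pos \<psi> L" Z] inv_pos_young_fenchel[of L] that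
      young_fenchel_nonneg[of Z] by force
  then show "eventually (\<lambda>L. Z \<le> inv_pos \<psi> L) at_top"
    by (rule eventually_mono[OF eventually_gt_at_top])
qed

lemma young_fenchel_diff_le_nn_integral:
  assumes "0 \<le> a" "a \<le> b"
  shows "ennreal (\<psi> b - \<psi> a) \<le> (\<integral>\<^sup>+y\<in>{a..b}. ennreal (q y) \<partial>lborel)"
proof -
  let ?I = "\<integral>\<^sup>+y\<in>{a..b}. ennreal (q y) \<partial>lborel"
  have riemann: "ennreal (\<psi> b - \<psi> a - (b - a) * (q b - q a) / real n) \<le> ?I" if "1 \<le> n" for n :: nat
  proof -
    define h where "h = (b - a) / real n"
    define t where "t i = a + real i * h" for i :: nat
    have h: "0 \<le> h" "t n = b" "t 0 = a" using assms that by (simp_all add: h_def t_def)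
    have "\<psi> b - \<psi> a = (\<Sum>i<n. \<psi> (t (Suc i)) - \<psi> (t i))"
      using sum_lessThan_telescope[of "\<lambda>i. \<psi> (t i)" n] h by simp
    also have "\<dots> \<le> (\<Sum>i<n. h * q (t (Suc i)))"
      using young_fenchel_le_add[of "t i" "t (Suc i)" for i] assms h(1)
      by (intro sum_mono) (simp add: t_def algebra_simps)
    also have "\<dots> = (\<Sum>i<n. h * q (t i)) + h * (q b - q a)"
      using sum_lessThan_telescope[of "\<lambda>i. h * q (t i)" n]
      by (simp add: sum_subtractf h right_diff_distrib)
    finally have "\<psi> b - \<psi> a - (b - a) * (q b - q a) / real n \<le> (\<Sum>i<n. h * q (a + real i * h))"
      by (simp add: h_def t_def)
    then have "ennreal (\<psi> b - \<psi> a - (b - a) * (q b - q a) / real n) \<le> (\<integral>\<^sup>+y\<in>{a..<a + real n * h}. ennreal (q y) \<partial>lborel)"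
      using sum_le_nn_integral_mono_on[of a q h n] mono_on_subset[OF q_mono_on] q_nonneg assms h(1)
      by (force intro: order_trans[OF ennreal_leI])
    also have "\<dots> \<le> ?I"
      using h by (intro nn_integral_mono) (auto simp: t_def indicator_def)
    finally show ?thesis .
  qed
  have "(\<lambda>n. ennreal (\<psi> b - \<psi> a - (b - a) * (q b - q a) / real n)) \<longlonglongrightarrow> ennreal (\<psi> b - \<psi> a - 0)"
    by (intro tendsto_ennrealI tendsto_intros lim_const_over_n)
  then show ?thesis
    using riemann by (intro LIMSEQ_le_const2) auto
qed

definition psi_shell :: "real \<Rightarrow> real set" where
  "psi_shell N = {inv_pos \<psi> (ln N - ln 2) .. inv_pos \<psi> (ln N)}"

lemma psi_shell_nonneg:
  assumes "2 \<le> N" "y \<in> psi_shell N"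
  shows "0 \<le> y"
proof -
  have "0 \<le> inv_pos \<psi> (ln N - ln 2)" using assms(1) by (intro inv_pos_young_fenchel(1)) simp
  then show ?thesis using assms(2) unfolding psi_shell_def by simp
qed

lemma young_fenchel_on_psi_shell:
  assumes "2 \<le> N" "y \<in> psi_shell N"
  shows "ln N - ln 2 \<le> \<psi> y" and "\<psi> y \<le> ln N"
proof -
  have L: "0 \<le> ln N - ln 2" "0 \<le> ln N" using assms(1) ln_ge_zero[of 2] by simp_all
  have y: "inv_pos \<psi> (ln N - ln 2) \<le> y" "y \<le> inv_pos \<psi> (ln N)"
    using assms(2) by (simp_all add: psi_shell_def)
  show "ln N - ln 2 \<le> \<psi> y"
    using young_fenchel_mono[OF inv_pos_young_fenchel(1)[OF L(1)] y(1)] inv_pos_young_fenchel(2)[OF L(1)]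
    by simp
  show "\<psi> y \<le> ln N"
    using young_fenchel_mono[OF psi_shell_nonneg[OF assms] y(2)] inv_pos_young_fenchel(2)[OF L(2)] by simp
qed

lemma nn_integral_q_psi_shell:
  assumes "2 \<le> N"
  shows "ennreal (ln 2) \<le> (\<integral>\<^sup>+y\<in>psi_shell N. ennreal (q y) \<partial>lborel)"
proof -
  have L: "0 \<le> ln N - ln 2" "ln N - ln 2 \<le> ln N" using assms by simp_all
  have "ennreal (\<psi> (inv_pos \<psi> (ln N)) - \<psi> (inv_pos \<psi> (ln N - ln 2)))
      \<le> (\<integral>\<^sup>+y\<in>psi_shell N. ennreal (q y) \<partial>lborel)"
    unfolding psi_shell_def using inv_pos_young_fenchel(1)[OF L(1)] inv_pos_mono[OF L]
    by (rule young_fenchel_diff_le_nn_integral)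
  then show ?thesis
    using inv_pos_young_fenchel(2) L by simp
qed

lemma psi_shell_cells_subset:
  "{i \<in> large_cells. y \<in> psi_shell (real (fst i * snd i))}
     \<subseteq> {(k, n). 1 \<le> k \<and> 1 \<le> n \<and> 4 \<le> k * n \<and>
          exp (\<psi> y) \<le> real (k * n) \<and> real (k * n) \<le> 2 * exp (\<psi> y)}"
proof
  fix i assume i: "i \<in> {i \<in> large_cells. y \<in> psi_shell (real (fst i * snd i))}"
  obtain k n where kn: "i = (k, n)" by (cases i)
  have N: "2 \<le> real (k * n)" using large_cells_size[of i] i by (simp add: kn)
  have y: "y \<in> psi_shell (real (k * n))" using i by (simp add: kn)
  have pos: "0 < real (k * n)" using N by simp
  have "exp (\<psi> y) \<le> real (k * n)"
    using young_fenchel_on_psi_shell(2)[OF N y] ln_ge_iff[OF pos] by blast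
  moreover have "ln (real (k * n)) \<le> ln (2 * exp (\<psi> y))"
    using young_fenchel_on_psi_shell(1)[OF N y] by (simp add: ln_mult)
  then have "real (k * n) \<le> 2 * exp (\<psi> y)"
    using pos by (subst (asm) ln_le_cancel_iff) auto
  ultimately show "i \<in> {(k, n). 1 \<le> k \<and> 1 \<le> n \<and> 4 \<le> k * n \<and>
      exp (\<psi> y) \<le> real (k * n) \<and> real (k * n) \<le> 2 * exp (\<psi> y)}"
    using i by (simp add: kn large_cells_def)
qed

lemma psi_shell_overlap_le:
  "(\<integral>\<^sup>+i. ennreal (shell_weight (real (fst i * snd i))) * indicator (psi_shell (real (fst i * snd i))) y
      \<partial>count_space large_cells) \<le> ennreal (4 / ln 2 * ((1 + ln 2) / ln 4 + 1))"
proof -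
  define S where "S = {i \<in> large_cells. y \<in> psi_shell (real (fst i * snd i))}"
  have "1 \<le> exp (\<psi> y)" using young_fenchel_nonneg[of y] by simp
  then have "1 \<le> 2 * exp (\<psi> y)" by linarith
  then have "finite {(k, n). 1 \<le> k \<and> 1 \<le> n \<and> real (k * n) \<le> 2 * exp (\<psi> y)}"
    by (rule hyperbola_lattice_points(1))
  then have "finite S"
    by (rule finite_subset[rotated]) (use psi_shell_cells_subset[of y] in \<open>auto simp: S_def\<close>)
  have "(\<integral>\<^sup>+i. ennreal (shell_weight (real (fst i * snd i))) * indicator (psi_shell (real (fst i * snd i))) y
      \<partial>count_space large_cells) = (\<integral>\<^sup>+i. ennreal (shell_weight (real (fst i * snd i))) * indicator (psi_shell (real (fst i * snd i))) y
      \<partial>count_space S)"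
    by (rule nn_integral_count_space_eq) (auto simp: S_def)
  also have "\<dots> = (\<Sum>i\<in>S. ennreal (shell_weight (real (fst i * snd i))))"
    using \<open>finite S\<close> by (simp add: nn_integral_count_space_finite S_def)
  also have "\<dots> = ennreal (\<Sum>i\<in>S. shell_weight (real (fst i * snd i)))"
  proof (rule sum_ennreal)
    fix i assume "i \<in> S"
    then show "0 \<le> shell_weight (real (fst i * snd i))"
      using large_cells_size[of i] by (intro shell_weight_nonneg) (simp add: S_def)
  qed
  also have "\<dots> = ennreal (\<Sum>(k, n)\<in>S. shell_weight (real (k * n)))"
    by (simp add: case_prod_beta)
  also have "\<dots> \<le> ennreal (4 / ln 2 * ((1 + ln 2) / ln 4 + 1))"
    unfolding S_def by (intro ennreal_leI dyadic_shell_weight_sum_le[OF young_fenchel_nonneg psi_shell_cells_subset])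
  finally show ?thesis .
qed

subsection \<open>Tail bounds\<close>

lemma mgf_bound_mono:
  assumes "mgf_bound M \<phi> X a" "0 < a" "a \<le> b"
  shows "mgf_bound M \<phi> X b"
proof -
  have "exp (\<phi> (a * t)) \<le> exp (\<phi> (b * t))" for t
    using assms(2,3) by (simp, intro phi_mono_abs) (simp add: abs_mult mult_right_mono)
  with assms(1) show ?thesis
    unfolding mgf_bound_def by (blast intro: order_trans)
qed

text \<open>The infimum defining \<open>tau_phi\<close> is attained, by continuity of \<open>\<phi>\<close>.\<close>

lemma mgf_bound_tau_phi:
  assumes "phi_subgaussian M \<phi> X" "tau_phi M \<phi> X \<le> c" "0 < c"
  shows "mgf_bound M \<phi> X c"
proof -
  let ?A = "{a. 0 < a \<and> mgf_bound M \<phi> X a}"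
  have above: "mgf_bound M \<phi> X b" if "c < b" for b
  proof -
    have "?A \<noteq> {}" using assms(1) unfolding phi_subgaussian_def by blast
    moreover have "Inf ?A < b" using assms(2) that unfolding tau_phi_def by simp
    ultimately obtain a where "a \<in> ?A" "a < b" using cInf_lessD[of ?A b] by blast
    then show ?thesis using mgf_bound_mono[of M X a b] by simp
  qed
  show ?thesis
    unfolding mgf_bound_def
  proof
    fix t
    have "isCont \<phi> (c * t)"
      using phi_continuous by (simp add: continuous_on_eq_continuous_at)
    moreover have "((\<lambda>b. b * t) \<longlongrightarrow> c * t) (at_right c)"
      by (intro tendsto_intros)
    ultimately have "((\<lambda>b. \<phi> (b * t)) \<longlongrightarrow> \<phi> (c * t)) (at_right c)"
      by (rule isCont_tendsto_compose)
    then have lim: "((\<lambda>b. exp (\<phi> (b * t))) \<longlongrightarrow> exp (\<phi> (c * t))) (at_right c)"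
      by (rule tendsto_exp)
    have ev: "\<forall>\<^sub>F b in at_right c. (\<integral>\<omega>. exp (t * X \<omega>) \<partial>M) \<le> exp (\<phi> (b * t))"
      using eventually_at_right_less[of c]
    proof (rule eventually_mono)
      fix b assume "c < b"
      then show "(\<integral>\<omega>. exp (t * X \<omega>) \<partial>M) \<le> exp (\<phi> (b * t))"
        using above[of b] unfolding mgf_bound_def by simp
    qed
    have "(\<integral>\<omega>. exp (t * X \<omega>) \<partial>M) \<le> exp (\<phi> (c * t))"
      by (rule tendsto_le[OF _ lim tendsto_const ev]) simp
    moreover have "integrable M (\<lambda>\<omega>. exp (t * X \<omega>))"
      using above[of "c + 1"] unfolding mgf_bound_def by simp
    ultimately show "integrable M (\<lambda>\<omega>. exp (t * X \<omega>)) \<and> (\<integral>\<omega>. exp (t * X \<omega>) \<partial>M) \<le> exp (\<phi> (c * t))"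
      by simp
  qed
qed

lemma chernoff_bound:
  assumes "prob_space M" "X \<in> borel_measurable M" "mgf_bound M \<phi> X c" "0 < c" "0 \<le> u"
  shows "measure M {\<omega> \<in> space M. u < X \<omega>} \<le> exp (\<phi> y - u / c * y)"
proof -
  interpret prob_space M by fact
  show ?thesis
  proof (cases "y \<le> 0")
    case True
    then have "u / c * y \<le> 0" using assms(4,5) by (intro mult_nonneg_nonpos) auto
    then have "1 \<le> exp (\<phi> y - u / c * y)" using phi_nonneg[of y] by simp
    then show ?thesis using prob_le_1[of "{\<omega> \<in> space M. u < X \<omega>}"] by linarith
  next
    case False
    define t where "t = y / c"
    have t: "0 < t" "c * t = y" using False assms(4) by (simp_all add: t_def)
    have int: "integrable M (\<lambda>\<omega>. exp (t * X \<omega>))"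
      using assms(3) by (simp add: mgf_bound_def)
    have "measure M {\<omega> \<in> space M. u < X \<omega>} \<le> measure M {\<omega> \<in> space M. exp (t * u) \<le> exp (t * X \<omega>)}"
      using t(1) assms(2) by (intro finite_measure_mono) auto
    also have "\<dots> \<le> (\<integral>\<omega>. exp (t * X \<omega>) \<partial>M) / exp (t * u)"
      by (rule integral_Markov_inequality_measure[OF int, where A = "space M"]) auto
    also have "\<dots> \<le> exp (\<phi> (c * t)) / exp (t * u)"
      using assms(3) by (simp add: mgf_bound_def divide_right_mono)
    also have "\<dots> = exp (\<phi> y - u / c * y)"
      using t assms(4) by (simp add: exp_diff t_def)
    finally show ?thesis .
  qed
qed

lemma tail_bound:
  assumes "prob_space M" "X \<in> borel_measurable M" "mgf_bound M \<phi> X c" "0 < c" "0 \<le> u"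
  shows "measure M {\<omega> \<in> space M. u < X \<omega>} \<le> exp (- \<psi> (u / c))"
proof (cases "measure M {\<omega> \<in> space M. u < X \<omega>} = 0")
  case False
  let ?P = "measure M {\<omega> \<in> space M. u < X \<omega>}"
  have "0 < ?P" using False by (simp add: less_le)
  have "\<psi> (u / c) \<le> - ln ?P"
  proof (rule young_fenchel_le)
    fix y
    have "ln ?P \<le> ln (exp (\<phi> y - u / c * y))"
      using chernoff_bound[OF assms, of y] \<open>0 < ?P\<close> by (subst ln_le_cancel_iff) auto
    then show "u / c * y - \<phi> y \<le> - ln ?P" by simp
  qed
  then have "exp (ln ?P) \<le> exp (- \<psi> (u / c))" by simp
  then show ?thesis using \<open>0 < ?P\<close> by simp
qed simp

lemma tail_bound_inv_pos:
  assumes "prob_space M" "phi_subgaussian M \<phi> X" "tau_phi M \<phi> X \<le> c" "0 < c" "0 \<le> L" "0 \<le> e"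
  shows "measure M {\<omega> \<in> space M. c * inv_pos \<psi> L + e < X \<omega>}
           \<le> exp (- L - e * q (inv_pos \<psi> L) / c)"
proof -
  let ?s = "inv_pos \<psi> L"
  have "measure M {\<omega> \<in> space M. c * ?s + e < X \<omega>} \<le> exp (- \<psi> ((c * ?s + e) / c))"
    using assms mgf_bound_tau_phi inv_pos_young_fenchel(1)[of L]
    by (intro tail_bound) (auto simp: phi_subgaussian_def)
  also have "\<dots> \<le> exp (- \<psi> ?s - e / c * q ?s)"
    using young_fenchel_add_ge[of ?s "e / c"] inv_pos_young_fenchel(1)[OF assms(5)] assms(4,6)
    by (simp add: add_divide_distrib)
  finally show ?thesis
    using inv_pos_young_fenchel(2)[OF assms(5)] by simp
qed

end

section \<open>Double arrays of \<open>\<phi>\<close>-subgaussian variables\<close>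

locale phi_subgaussian_array = orlicz_function \<phi> + prob_space M
  for \<phi> :: "real \<Rightarrow> real" and M :: "'a measure" +
  fixes g :: "real \<Rightarrow> real" and X :: "nat \<Rightarrow> nat \<Rightarrow> 'a \<Rightarrow> real"
  assumes subgaussian: "\<And>k n. 1 \<le> k \<Longrightarrow> 1 \<le> n \<Longrightarrow> phi_subgaussian M \<phi> (X k n)"
    and g_pos: "\<And>x. 0 \<le> x \<Longrightarrow> 0 < g x"
    and g_mono: "mono_on {0..} g"
    and tau_le: "\<And>k n. 1 \<le> k \<Longrightarrow> 1 \<le> n \<Longrightarrow> tau_phi M \<phi> (X k n) \<le> g (ln (real (k * n)))"
begin

definition threshold :: "real \<Rightarrow> real" where
  "threshold N = g (ln N) * inv_pos \<psi> (ln N)"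

definition integrand :: "real \<Rightarrow> real \<Rightarrow> real" where
  "integrand \<epsilon> y = \<psi> y * q y * exp (- \<epsilon> * q y / g (\<psi> y + ln 2))"

lemma threshold_mono_on: "mono_on {1..} threshold"
proof (rule mono_onI)
  fix s t :: real assume "s \<in> {1..}" "t \<in> {1..}" "s \<le> t"
  then have "0 \<le> ln s" "ln s \<le> ln t" by simp_all
  then show "threshold s \<le> threshold t"
    unfolding threshold_def using g_pos[of "ln t"] inv_pos_young_fenchel(1)[of "ln s"]
    by (intro mult_mono mono_onD[OF g_mono] inv_pos_mono) auto
qed

lemma threshold_at_top: "filterlim threshold at_top at_top"
proof (rule filterlim_at_top_mono)
  show "filterlim (\<lambda>N. g 0 * inv_pos \<psi> (ln N)) at_top at_top"
    using g_pos[of 0] filterlim_compose[OF inv_pos_at_top ln_at_top]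
    by (intro filterlim_tendsto_pos_mult_at_top[OF tendsto_const]) auto
  show "\<forall>\<^sub>F N in at_top. g 0 * inv_pos \<psi> (ln N) \<le> threshold N"
    using eventually_ge_at_top[of 1]
  proof (rule eventually_mono)
    fix N :: real assume "1 \<le> N"
    then show "g 0 * inv_pos \<psi> (ln N) \<le> threshold N"
      unfolding threshold_def using inv_pos_young_fenchel(1)[of "ln N"]
      by (intro mult_right_mono mono_onD[OF g_mono]) auto
  qed
qed

lemma integrand_measurable:
  "(\<lambda>y. ennreal (integrand \<epsilon> y) * indicator {0..} y) \<in> borel_measurable borel"
proof -
  have g_psi: "mono_on {0..} (\<lambda>y. g (\<psi> y + ln 2))"
    using young_fenchel_nonneg by (intro mono_onI mono_onD[OF g_mono]) (auto intro: young_fenchel_mono)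
  note [measurable] = borel_measurable_mono_on_fnc[OF young_fenchel_mono_on]
    borel_measurable_mono_on_fnc[OF q_mono_on] borel_measurable_mono_on_fnc[OF g_psi]
  have "(\<lambda>y. ennreal (integrand \<epsilon> y)) \<in> borel_measurable (restrict_space borel {0..})"
    unfolding integrand_def by measurable
  then show ?thesis
    by (subst (asm) borel_measurable_restrict_space_iff_ennreal) auto
qed

lemma integrand_psi_shell_ge:
  assumes "0 < \<epsilon>" "2 \<le> N" "y \<in> psi_shell N"
  shows "(ln N - ln 2) * exp (- \<epsilon> * q (inv_pos \<psi> (ln N)) / g (ln N)) * q y \<le> integrand \<epsilon> y"
proof -
  let ?s = "inv_pos \<psi> (ln N)"
  have y: "0 \<le> y" "y \<le> ?s" using psi_shell_nonneg[OF assms(2,3)] assms(3) by (simp_all add: psi_shell_def)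
  have psi_y: "ln N - ln 2 \<le> \<psi> y" "\<psi> y \<le> ln N" using young_fenchel_on_psi_shell[OF assms(2,3)] by simp_all
  have lnN: "0 \<le> ln N" using assms(2) by simp
  have g: "0 < g (ln N)" "g (ln N) \<le> g (\<psi> y + ln 2)"
    using g_pos[OF lnN] psi_y lnN by (auto intro: mono_onD[OF g_mono])
  have "q y / g (\<psi> y + ln 2) \<le> q y / g (ln N)"
    using g q_nonneg[OF y(1)] by (intro divide_left_mono) auto
  also have "\<dots> \<le> q ?s / g (ln N)"
    using g(1) q_mono[OF y] by (intro divide_right_mono) auto
  finally have "\<epsilon> * (q y / g (\<psi> y + ln 2)) \<le> \<epsilon> * (q ?s / g (ln N))"
    using assms(1) by (intro mult_left_mono) auto
  then have "exp (- \<epsilon> * q ?s / g (ln N)) \<le> exp (- \<epsilon> * q y / g (\<psi> y + ln 2))"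
    by simp
  then have "(ln N - ln 2) * exp (- \<epsilon> * q ?s / g (ln N)) \<le> \<psi> y * exp (- \<epsilon> * q y / g (\<psi> y + ln 2))"
    using psi_y(1) young_fenchel_nonneg[of y] assms(2) by (intro mult_mono) auto
  from mult_right_mono[OF this q_nonneg[OF y(1)]] show ?thesis
    unfolding integrand_def by (simp add: ac_simps)
qed

lemma nn_integral_integrand_psi_shell_ge:
  assumes "0 < \<epsilon>" "2 \<le> N"
  shows "ennreal ((ln N - ln 2) * exp (- \<epsilon> * q (inv_pos \<psi> (ln N)) / g (ln N)) * ln 2)
           \<le> (\<integral>\<^sup>+y\<in>psi_shell N. ennreal (integrand \<epsilon> y) \<partial>lborel)"
proof -
  define K where "K = (ln N - ln 2) * exp (- \<epsilon> * q (inv_pos \<psi> (ln N)) / g (ln N))"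
  have K: "0 \<le> K" using assms(2) by (simp add: K_def)
  have q_meas: "(\<lambda>y. ennreal (q y) * indicator (psi_shell N) y) \<in> borel_measurable borel"
    using psi_shell_nonneg[OF assms(2)]
    by (intro borel_measurable_mono_on_indicator[OF q_mono_on]) (auto simp: psi_shell_def)
  have "ennreal (K * ln 2) = ennreal K * ennreal (ln 2)"
    using K by (simp add: ennreal_mult)
  also have "\<dots> \<le> ennreal K * (\<integral>\<^sup>+y\<in>psi_shell N. ennreal (q y) \<partial>lborel)"
    using nn_integral_q_psi_shell[OF assms(2)] by (rule mult_left_mono) simp
  also have "\<dots> = (\<integral>\<^sup>+y\<in>psi_shell N. ennreal (K * q y) \<partial>lborel)"
    using K q_meas by (simp add: nn_integral_cmult[symmetric] ennreal_mult' mult.assoc)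
  also have "\<dots> \<le> (\<integral>\<^sup>+y\<in>psi_shell N. ennreal (integrand \<epsilon> y) \<partial>lborel)"
    using integrand_psi_shell_ge[OF assms] unfolding K_def
    by (intro nn_integral_mono) (auto simp: indicator_def intro: ennreal_leI)
  finally show ?thesis by (simp add: K_def)
qed

lemma prob_exceedance_le:
  assumes "1 \<le> k" "1 \<le> n" "2 < real (k * n)" "0 < \<epsilon>"
  shows "ennreal (prob {\<omega> \<in> space M. threshold (real (k * n)) + \<epsilon> < X k n \<omega>})
           \<le> ennreal (shell_weight (real (k * n))) * (\<integral>\<^sup>+y\<in>psi_shell (real (k * n)). ennreal (integrand \<epsilon> y) \<partial>lborel)"
proof -
  define N where "N = real (k * n)"
  define F where "F = exp (- \<epsilon> * q (inv_pos \<psi> (ln N)) / g (ln N))"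
  have N: "2 < N" "0 \<le> ln N" and lnN: "ln 2 < ln N" using assms(3) by (simp_all add: N_def)
  have "prob {\<omega> \<in> space M. g (ln N) * inv_pos \<psi> (ln N) + \<epsilon> < X k n \<omega>} \<le> exp (- ln N - \<epsilon> * q (inv_pos \<psi> (ln N)) / g (ln N))"
    using tau_le[OF assms(1,2)] g_pos[OF N(2)] N(2) assms(4)
    by (intro tail_bound_inv_pos subgaussian prob_space_axioms assms(1,2)) (simp_all add: N_def)
  also have "\<dots> = shell_weight N * ((ln N - ln 2) * F * ln 2)"
    using N lnN by (simp add: F_def shell_weight_def exp_diff exp_minus field_simps)
  finally have "ennreal (prob {\<omega> \<in> space M. threshold N + \<epsilon> < X k n \<omega>})
      \<le> ennreal (shell_weight N) * ennreal ((ln N - ln 2) * F * ln 2)"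
    using N lnN by (simp add: threshold_def shell_weight_def F_def ennreal_mult[symmetric] ennreal_leI)
  also have "\<dots> \<le> ennreal (shell_weight N) * (\<integral>\<^sup>+y\<in>psi_shell N. ennreal (integrand \<epsilon> y) \<partial>lborel)"
    using nn_integral_integrand_psi_shell_ge[OF assms(4), of N] N(1) unfolding F_def
    by (intro mult_left_mono) auto
  finally show ?thesis by (simp add: N_def)
qed

definition exceedance :: "real \<Rightarrow> nat \<times> nat \<Rightarrow> 'a set" where
  "exceedance \<epsilon> i = (if i \<in> large_cells
     then {\<omega> \<in> space M. threshold (real (fst i * snd i)) + \<epsilon> < X (fst i) (snd i) \<omega>} else {})"

lemma exceedance_in_events: "exceedance \<epsilon> i \<in> events"
  using subgaussian[of "fst i" "snd i"] by (auto simp: exceedance_def large_cells_def phi_subgaussian_def)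

lemma emeasure_exceedance_le:
  assumes "0 < \<epsilon>" "i \<in> large_cells"
  shows "emeasure M (exceedance \<epsilon> i)
    \<le> (\<integral>\<^sup>+y. ennreal (shell_weight (real (fst i * snd i))) * indicator (psi_shell (real (fst i * snd i))) y
           * (ennreal (integrand \<epsilon> y) * indicator {0..} y) \<partial>lborel)"
proof -
  define N where "N = real (fst i * snd i)"
  define f where "f y = ennreal (integrand \<epsilon> y) * indicator {0..} y" for y
  have N: "2 < N" using large_cells_size[OF assms(2)] by (simp add: N_def)
  have [measurable]: "f \<in> borel_measurable borel"
    using integrand_measurable by (simp add: f_def[abs_def])
  have "ennreal (shell_weight N) * indicator (psi_shell N) y * f y
      = ennreal (shell_weight N) * (f y * indicator (psi_shell N) y)" for y
    by (simp add: ac_simps)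
  then have "(\<integral>\<^sup>+y. ennreal (shell_weight N) * indicator (psi_shell N) y * f y \<partial>lborel)
      = ennreal (shell_weight N) * (\<integral>\<^sup>+y. f y * indicator (psi_shell N) y \<partial>lborel)"
    by (simp add: nn_integral_cmult psi_shell_def)
  also have "(\<integral>\<^sup>+y. f y * indicator (psi_shell N) y \<partial>lborel)
      = (\<integral>\<^sup>+y\<in>psi_shell N. ennreal (integrand \<epsilon> y) \<partial>lborel)"
    using psi_shell_nonneg[of N] N by (intro nn_integral_cong) (auto simp: f_def indicator_def)
  moreover have "emeasure M (exceedance \<epsilon> i) = ennreal (prob {\<omega> \<in> space M. threshold N + \<epsilon> < X (fst i) (snd i) \<omega>})"
    using assms(2) exceedance_in_events by (simp add: exceedance_def emeasure_eq_measure N_def)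
  ultimately show ?thesis
    using prob_exceedance_le[of "fst i" "snd i" \<epsilon>] assms N by (auto simp: large_cells_def N_def f_def)
qed

lemma nn_integral_emeasure_exceedance_finite:
  assumes "0 < \<epsilon>" and integrable: "(\<integral>\<^sup>+y\<in>{0..}. ennreal (integrand \<epsilon> y) \<partial>lborel) < \<infinity>"
  shows "(\<integral>\<^sup>+i. emeasure M (exceedance \<epsilon> i) \<partial>count_space UNIV) < \<infinity>"
proof -
  define w where "w i y = ennreal (shell_weight (real (fst i * snd i))) * indicator (psi_shell (real (fst i * snd i))) y" for i y
  define f where "f y = ennreal (integrand \<epsilon> y) * indicator {0..} y" for y
  define C :: real where "C = 4 / ln 2 * ((1 + ln 2) / ln 4 + 1)"
  have [measurable]: "f \<in> borel_measurable borel"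
    using integrand_measurable by (simp add: f_def[abs_def])
  have [measurable]: "w i \<in> borel_measurable borel" for i
    unfolding w_def[abs_def] psi_shell_def by measurable
  have "(\<integral>\<^sup>+i. emeasure M (exceedance \<epsilon> i) \<partial>count_space UNIV)
      = (\<integral>\<^sup>+i. emeasure M (exceedance \<epsilon> i) \<partial>count_space large_cells)"
    by (rule nn_integral_count_space_eq) (auto simp: exceedance_def)
  also have "\<dots> \<le> (\<integral>\<^sup>+i. \<integral>\<^sup>+y. w i y * f y \<partial>lborel \<partial>count_space large_cells)"
    using emeasure_exceedance_le[OF assms(1)] by (intro nn_integral_mono) (simp add: w_def f_def)
  also have "\<dots> = (\<integral>\<^sup>+y. (\<integral>\<^sup>+i. w i y \<partial>count_space large_cells) * f y \<partial>lborel)"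
    by (subst nn_integral_count_space_nn_integral[symmetric]) (simp_all add: nn_integral_multc)
  also have "\<dots> \<le> (\<integral>\<^sup>+y. ennreal C * f y \<partial>lborel)"
    using psi_shell_overlap_le unfolding w_def C_def by (intro nn_integral_mono mult_right_mono) auto
  also have "\<dots> = ennreal C * (\<integral>\<^sup>+y. f y \<partial>lborel)"
    by (rule nn_integral_cmult) simp
  also have "\<dots> < \<infinity>"
    using integrable by (simp add: f_def ennreal_mult_less_top)
  finally show ?thesis .
qed

lemma AE_finite_exceedances:
  assumes "0 < \<epsilon>" "(\<integral>\<^sup>+y\<in>{0..}. ennreal (integrand \<epsilon> y) \<partial>lborel) < \<infinity>"
  shows "AE \<omega> in M. finite {(k, n). 1 \<le> k \<and> 1 \<le> n \<and> threshold (real (k * n)) + \<epsilon> < X k n \<omega>}"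
proof -
  have "AE \<omega> in M. finite {i. \<omega> \<in> exceedance \<epsilon> i}"
    using exceedance_in_events nn_integral_emeasure_exceedance_finite[OF assms]
    by (rule AE_finitely_many_events)
  with AE_space show ?thesis
  proof eventually_elim
    case (elim \<omega>)
    then have "{(k, n). 1 \<le> k \<and> 1 \<le> n \<and> threshold (real (k * n)) + \<epsilon> < X k n \<omega>}
        \<subseteq> {i. \<omega> \<in> exceedance \<epsilon> i} \<union> {(k, n). 1 \<le> k \<and> 1 \<le> n \<and> (k, n) \<notin> large_cells}"
      by (auto simp: exceedance_def)
    then show ?case
      by (rule finite_subset) (use elim finite_small_cells in simp)
  qed
qed

lemma AE_finite_exceedances_all:
  assumes "\<exists>\<epsilon>0>0. \<forall>\<epsilon>. 0 < \<epsilon> \<and> \<epsilon> \<le> \<epsilon>0 \<longrightarrow> (\<integral>\<^sup>+y\<in>{0..}. ennreal (integrand \<epsilon> y) \<partial>lborel) < \<infinity>"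
  shows "AE \<omega> in M. \<forall>e>0. finite {(k, n). 1 \<le> k \<and> 1 \<le> n \<and> threshold (real (k * n)) + e < X k n \<omega>}"
proof -
  obtain \<epsilon>0 where "0 < \<epsilon>0"
    and integrable: "\<And>\<epsilon>. 0 < \<epsilon> \<Longrightarrow> \<epsilon> \<le> \<epsilon>0 \<Longrightarrow> (\<integral>\<^sup>+y\<in>{0..}. ennreal (integrand \<epsilon> y) \<partial>lborel) < \<infinity>"
    using assms by blast
  define \<epsilon> where "\<epsilon> r = \<epsilon>0 / (real r + 1)" for r :: nat
  have "AE \<omega> in M. \<forall>r. finite {(k, n). 1 \<le> k \<and> 1 \<le> n \<and> threshold (real (k * n)) + \<epsilon> r < X k n \<omega>}"
    unfolding AE_all_countable using \<open>0 < \<epsilon>0\<close>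
    by (intro allI AE_finite_exceedances integrable) (auto simp: \<epsilon>_def field_simps)
  then show ?thesis
  proof (rule eventually_mono, intro allI impI)
    fix \<omega> and e :: real
    assume fin: "\<forall>r. finite {(k, n). 1 \<le> k \<and> 1 \<le> n \<and> threshold (real (k * n)) + \<epsilon> r < X k n \<omega>}"
      and "0 < e"
    obtain r :: nat where "\<epsilon>0 / e < real r" using reals_Archimedean2 by blast
    then have "\<epsilon> r < e" using \<open>0 < e\<close> \<open>0 < \<epsilon>0\<close> by (simp add: \<epsilon>_def field_simps)
    then show "finite {(k, n). 1 \<le> k \<and> 1 \<le> n \<and> threshold (real (k * n)) + e < X k n \<omega>}"
      by (intro finite_subset[OF _ fin[rule_format, of r]]) auto
  qed
qed

end

theorem theorem1:
  fixes M :: "'a measure" and \<phi> g :: "real \<Rightarrow> real"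
    and X :: "nat \<Rightarrow> nat \<Rightarrow> 'a \<Rightarrow> real"
  assumes "prob_space M"
    and "orlicz_N \<phi>"
    and "\<And>k n. k \<ge> 1 \<Longrightarrow> n \<ge> 1 \<Longrightarrow> phi_subgaussian M \<phi> (X k n)"
    and "\<And>x. x \<ge> 0 \<Longrightarrow> g x > 0"
    and "mono_on {0..} g"
    and "\<And>k n. k \<ge> 1 \<Longrightarrow> n \<ge> 1 \<Longrightarrow>
           tau_phi M \<phi> (X k n) \<le> g (ln (real (k * n)))"
    and "\<exists>\<epsilon>0>0. \<forall>\<epsilon>. 0 < \<epsilon> \<and> \<epsilon> \<le> \<epsilon>0 \<longrightarrow>
           (\<integral>\<^sup>+ x \<in> {0..}. ennreal (young_fenchel \<phi> x * orlicz_q \<phi> x *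
               exp (- \<epsilon> * orlicz_q \<phi> x / g (young_fenchel \<phi> x + ln 2))) \<partial>lborel) < \<infinity>"
  shows "AE \<omega> in M. \<forall>e>0. \<exists>N. \<forall>m j. m \<ge> 1 \<and> j \<ge> 1 \<and> max m j \<ge> N \<longrightarrow>
           \<bar>max (Max {X k n \<omega> | k n. 1 \<le> k \<and> k \<le> m \<and> 1 \<le> n \<and> n \<le> j}
                 - g (ln (real (m * j))) * inv_pos (young_fenchel \<phi>) (ln (real (m * j)))) 0\<bar> < e"
proof -
  interpret phi_subgaussian_array \<phi> M g X
    using assms(1-6)
    by (intro phi_subgaussian_array.intro orlicz_function.intro phi_subgaussian_array_axioms.intro) auto
  have "AE \<omega> in M. \<forall>e>0. finite {(k, n). 1 \<le> k \<and> 1 \<le> n \<and> threshold (real (k * n)) + e < X k n \<omega>}"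
    using assms(7) by (intro AE_finite_exceedances_all) (simp add: integrand_def)
  then show ?thesis
  proof (rule eventually_mono, intro allI impI)
    fix \<omega> and e :: real
    assume "\<forall>e>0. finite {(k, n). 1 \<le> k \<and> 1 \<le> n \<and> threshold (real (k * n)) + e < X k n \<omega>}" "0 < e"
    then show "\<exists>N. \<forall>m j. m \<ge> 1 \<and> j \<ge> 1 \<and> max m j \<ge> N \<longrightarrow>
           \<bar>max (Max {X k n \<omega> | k n. 1 \<le> k \<and> k \<le> m \<and> 1 \<le> n \<and> n \<le> j}
                 - g (ln (real (m * j))) * inv_pos (young_fenchel \<phi>) (ln (real (m * j)))) 0\<bar> < e"
      using max_sub_threshold_eventually_less[OF threshold_mono_on threshold_at_top, where x = "\<lambda>k n. X k n \<omega>"]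
      by (simp add: threshold_def)
  qed
qed

end
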